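(* If there is an $n$-vertex weighted graph $G=(V,w)$ with $\widetilde{\mathrm{cdim}}(G)=k$, then $D_{\mathrm{lin}}(\mathrm{MINCUT}_n)\ge k$.
   Context: An $n$-vertex weighted graph $G=(V,w)$ is given by $w\in\mathbb{R}_{\ge0}^{\binom n2}$ (weights on unordered pairs of distinct vertices). For $\emptyset\neq X\subsetneq V$, let $S_X\in\{0,1\}^{\binom n2}$ be the indicator vector of the pairs with exactly one endpoint in $X$; the cut weight is $\langle S_X,w\rangle$, and $c^*$ denotes the minimum cut weight. For $Y\in\mathbb{R}^{M\times N}$, $w\in\mathbb{R}^N$ and $c\in\mathbb{R}^M$, the $(w,c)$ one-sided row-by-row $\ell_1$-approximate rank of $Y$ is the minimum rank of a matrix $\tilde Y\in\mathbb{R}^{M\times N}$ with $\tilde Y\le Y$ entrywise and $\sum_j |w(j)(Y(i,j)-\tilde Y(i,j))|\le c(i)$ for every row $i$. Let $M_G$ be the $(2^{n-1}-1)\times\binom n2$ matrix whose rows are the vectors $S_X$ over all $2^{n-1}-1$ unordered bipartitions $\{X,V\setminus X\}$ of $V$ into nonempty parts, and let $c=M_G w-c^*\mathbf{1}$. The $\ell_1$-approximate cut dimension $\widetilde{\mathrm{cdim}}(G)$ is the $(w,c)$ one-sided row-by-row $\ell_1$-approximate rank of $M_G$. In $\mathrm{MINCUT}_n$ the input is an $n$-vertex weighted graph and the output is its minimum cut weight; a linear query $x\in\mathbb{R}^{\binom n2}$ is answered by $\langle x,w\rangle$ (adaptively). $D_{\mathrm{lin}}(\mathrm{MINCUT}_n)$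 is the minimum over deterministic linear query algorithms correct on all $n$-vertex weighted graphs of the worst-case number of queries. *)

theory Defs
  imports "HOL-Analysis.Analysis" "HOL-Library.Function_Algebras"
begin

text \<open>Vertices of an n-vertex graph are 0,...,n-1. The coordinates of R^(n choose 2)
  are indexed by the unordered pairs of distinct vertices, represented as (i,j) with i<j<n.
  Vectors in R^(n choose 2) are functions on these index pairs (values outside are ignored).\<close>

definition vpairs :: "nat \<Rightarrow> (nat \<times> nat) set" where
  "vpairs n = {(i, j). i < j \<and> j < n}"

definition ip :: "nat \<Rightarrow> (nat \<times> nat \<Rightarrow> real) \<Rightarrow> (nat \<times> nat \<Rightarrow> real) \<Rightarrow> real" where
  "ip n x w = (\<Sum>p\<in>vpairs n. x p * w p)"

definition weighted_graph :: "nat \<Rightarrow> (nat \<times> nat \<Rightarrow> real) \<Rightarrow> bool" where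
  "weighted_graph n w \<longleftrightarrow> (\<forall>p\<in>vpairs n. 0 \<le> w p)"

definition cutvec :: "nat set \<Rightarrow> nat \<times> nat \<Rightarrow> real" where
  "cutvec X p = (if (fst p \<in> X) \<noteq> (snd p \<in> X) then 1 else 0)"

definition cut_sets :: "nat \<Rightarrow> nat set set" where
  "cut_sets n = {X. X \<noteq> {} \<and> X \<subset> {0..<n}}"

definition mincut :: "nat \<Rightarrow> (nat \<times> nat \<Rightarrow> real) \<Rightarrow> real" where
  "mincut n w = Min ((\<lambda>X. ip n (cutvec X) w) ` cut_sets n)"

text \<open>Unordered bipartitions {X, V-X}, each represented by the side X not containing vertex 0.\<close>
definition bipartitions :: "nat \<Rightarrow> nat set set" where
  "bipartitions n = {X \<in> cut_sets n. 0 \<notin> X}"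

definition fscale :: "real \<Rightarrow> ('c \<Rightarrow> real) \<Rightarrow> ('c \<Rightarrow> real)" where
  "fscale a f = (\<lambda>j. a * f j)"

definition mat_rank :: "'r set \<Rightarrow> 'c set \<Rightarrow> ('r \<Rightarrow> 'c \<Rightarrow> real) \<Rightarrow> nat" where
  "mat_rank R C Y = vector_space.dim fscale ((\<lambda>i. (\<lambda>j. if j \<in> C then Y i j else 0)) ` R)"

definition os_l1_approx_rank ::
  "'r set \<Rightarrow> 'c set \<Rightarrow> ('r \<Rightarrow> 'c \<Rightarrow> real) \<Rightarrow> ('c \<Rightarrow> real) \<Rightarrow> ('r \<Rightarrow> real) \<Rightarrow> nat" where
  "os_l1_approx_rank R C Y w c =
     (LEAST r. \<exists>Y'. mat_rank R C Y' = r
        \<and> (\<forall>i\<in>R. \<forall>j\<in>C. Y' i j \<le> Y i j)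
        \<and> (\<forall>i\<in>R. (\<Sum>j\<in>C. \<bar>w j * (Y i j - Y' i j)\<bar>) \<le> c i))"

definition cut_matrix :: "nat set \<Rightarrow> nat \<times> nat \<Rightarrow> real" where
  "cut_matrix X p = cutvec X p"

definition approx_cdim :: "nat \<Rightarrow> (nat \<times> nat \<Rightarrow> real) \<Rightarrow> nat" where
  "approx_cdim n w = os_l1_approx_rank (bipartitions n) (vpairs n) cut_matrix w
      (\<lambda>X. ip n (cut_matrix X) w - mincut n w)"

text \<open>Deterministic adaptive linear query algorithms as decision trees: a node asks the
  query vector x and continues depending on the real answer; a leaf outputs a value.\<close>
datatype qtree = Leaf real | Query "nat \<times> nat \<Rightarrow> real" "real \<Rightarrow> qtree"

primrec run :: "qtree \<Rightarrow> nat \<Rightarrow> (nat \<times> nat \<Rightarrow> real) \<Rightarrow> real" where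
  "run (Leaf r) n w = r"
| "run (Query x f) n w = run (f (ip n x w)) n w"

primrec queries :: "qtree \<Rightarrow> nat \<Rightarrow> (nat \<times> nat \<Rightarrow> real) \<Rightarrow> nat" where
  "queries (Leaf r) n w = 0"
| "queries (Query x f) n w = Suc (queries (f (ip n x w)) n w)"

definition D_lin_mincut :: "nat \<Rightarrow> nat" where
  "D_lin_mincut n = (LEAST d. \<exists>T. \<forall>w. weighted_graph n w \<longrightarrow>
       run T n w = mincut n w \<and> queries T n w \<le> d)"

end

theory Submission imports Defs begin

text \<open>A deterministic linear query algorithm that makes at most \<open>d\<close> queries on every graph
  asks, on the fixed input \<open>w\<close>, queries \<open>x\<^sub>1, \<dots>, x\<^sub>d\<close>, and it answers identically on every
  \<open>w' \<ge> 0\<close> with \<open>\<langle>x\<^sub>i, w'\<rangle> = \<langle>x\<^sub>i, w\<rangle>\<close>. Correctness forces \<open>\<langle>S\<^sub>X, w'\<rangle> \<ge> c\<^sup>*\<close> on all these \<open>w'\<close>,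
  so by LP duality there are multipliers \<open>\<lambda>\<^sub>X\<close> with \<open>\<Sum>\<^sub>i \<lambda>\<^sub>X\<^sub>i x\<^sub>i \<le> S\<^sub>X\<close> and
  \<open>\<Sum>\<^sub>i \<lambda>\<^sub>X\<^sub>i \<langle>x\<^sub>i, w\<rangle> \<ge> c\<^sup>*\<close>. The matrix with rows \<open>\<Sum>\<^sub>i \<lambda>\<^sub>X\<^sub>i x\<^sub>i\<close> has rank at most \<open>d\<close> and is a
  one-sided \<open>\<ell>\<^sub>1\<close>-approximation of \<open>M\<^sub>G\<close> with row errors at most \<open>\<langle>S\<^sub>X, w\<rangle> - c\<^sup>*\<close>.
  LP duality itself is derived from Fourier-Motzkin elimination.\<close>

inductive_set nonneg_comb :: "('a \<Rightarrow> real) set \<Rightarrow> ('a \<Rightarrow> real) set" for K where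
  zero: "(\<lambda>_. 0) \<in> nonneg_comb K"
| step: "k \<in> K \<Longrightarrow> g \<in> nonneg_comb K \<Longrightarrow> 0 \<le> t \<Longrightarrow> (\<lambda>x. t * k x + g x) \<in> nonneg_comb K"

lemma nonneg_comb_base: "k \<in> K \<Longrightarrow> k \<in> nonneg_comb K"
  using nonneg_comb.step[OF _ nonneg_comb.zero, of k K 1] by simp

lemma nonneg_comb_add:
  "g \<in> nonneg_comb K \<Longrightarrow> h \<in> nonneg_comb K \<Longrightarrow> (\<lambda>x. g x + h x) \<in> nonneg_comb K"
proof (induction g rule: nonneg_comb.induct)
  case zero
  then show ?case by simp
next
  case (step k g t)
  then have "(\<lambda>x. t * k x + (g x + h x)) \<in> nonneg_comb K"
    by (intro nonneg_comb.step) auto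
  then show ?case by (simp add: ac_simps)
qed

lemma nonneg_comb_scale:
  "g \<in> nonneg_comb K \<Longrightarrow> 0 \<le> s \<Longrightarrow> (\<lambda>x. s * g x) \<in> nonneg_comb K"
proof (induction g rule: nonneg_comb.induct)
  case zero
  then show ?case by (simp add: nonneg_comb.zero)
next
  case (step k g t)
  then have "(\<lambda>x. (s * t) * k x + s * g x) \<in> nonneg_comb K"
    by (intro nonneg_comb.step) auto
  then show ?case by (simp add: algebra_simps)
qed

lemma nonneg_comb_trans:
  "g \<in> nonneg_comb K' \<Longrightarrow> K' \<subseteq> nonneg_comb K \<Longrightarrow> g \<in> nonneg_comb K"
  by (induction g rule: nonneg_comb.induct)
    (use nonneg_comb.zero nonneg_comb_add nonneg_comb_scale in blast)+

lemma nonneg_comb_vanishing: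
  "g \<in> nonneg_comb K \<Longrightarrow> \<forall>k\<in>K. k x = 0 \<Longrightarrow> g x = 0"
  by (induction g rule: nonneg_comb.induct) auto

lemma nonneg_comb_sum_repr:
  assumes "g \<in> nonneg_comb (f ` C)" "finite C"
  shows "\<exists>\<mu>. (\<forall>j\<in>C. 0 \<le> \<mu> j) \<and> g = (\<lambda>x. \<Sum>j\<in>C. \<mu> j * f j x)"
  using assms(1)
proof (induction g rule: nonneg_comb.induct)
  case zero
  show ?case by (intro exI[of _ "\<lambda>_. 0"]) auto
next
  case (step k g t)
  then obtain \<mu> j where \<mu>: "\<forall>j\<in>C. 0 \<le> \<mu> j" "g = (\<lambda>x. \<Sum>j\<in>C. \<mu> j * f j x)"
    and j: "j \<in> C" "k = f j"
    by blast
  define \<mu>' where "\<mu>' = \<mu>(j := \<mu> j + t)"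
  have "(\<Sum>j'\<in>C. \<mu>' j' * f j' x) = t * f j x + (\<Sum>j'\<in>C. \<mu> j' * f j' x)" for x
  proof -
    have "(\<Sum>j'\<in>C. \<mu>' j' * f j' x) = (\<Sum>j'\<in>C. \<mu> j' * f j' x + (if j' = j then t * f j x else 0))"
      unfolding \<mu>'_def by (intro sum.cong) (auto simp: algebra_simps)
    then show ?thesis
      using j assms(2) by (simp add: sum.distrib)
  qed
  moreover have "\<forall>j'\<in>C. 0 \<le> \<mu>' j'"
    using \<mu>(1) step.hyps(3) unfolding \<mu>'_def by auto
  ultimately show ?case
    using \<mu>(2) j(2) by (intro exI[of _ \<mu>']) auto
qed

text \<open>A constraint \<open>k\<close> encodes the inequality \<open>\<Sum>\<^sub>u k (Some u) * z u \<le> k None\<close>.\<close>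

definition lin_feasible :: "'v set \<Rightarrow> ('v option \<Rightarrow> real) set \<Rightarrow> bool" where
  "lin_feasible V K \<longleftrightarrow> (\<exists>z. \<forall>k\<in>K. (\<Sum>u\<in>V. k (Some u) * z u) \<le> k None)"

definition fm_eliminate :: "'v \<Rightarrow> ('v option \<Rightarrow> real) set \<Rightarrow> ('v option \<Rightarrow> real) set" where
  "fm_eliminate v K = {k\<in>K. k (Some v) = 0} \<union>
     (\<lambda>(p, q) x. - q (Some v) * p x + p (Some v) * q x) `
       ({p\<in>K. 0 < p (Some v)} \<times> {q\<in>K. q (Some v) < 0})"

lemma finite_fm_eliminate: "finite K \<Longrightarrow> finite (fm_eliminate v K)"
  unfolding fm_eliminate_def by auto

lemma fm_eliminate_coord: "k \<in> fm_eliminate v K \<Longrightarrow> k (Some v) = 0"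
  unfolding fm_eliminate_def by auto

lemma fm_eliminate_subset_nonneg_comb: "fm_eliminate v K \<subseteq> nonneg_comb K"
proof
  fix k assume "k \<in> fm_eliminate v K"
  then consider "k \<in> K"
    | p q where "p \<in> K" "q \<in> K" "0 < p (Some v)" "q (Some v) < 0"
        "k = (\<lambda>x. - q (Some v) * p x + p (Some v) * q x)"
    unfolding fm_eliminate_def by auto
  then show "k \<in> nonneg_comb K"
  proof cases
    case 1
    then show ?thesis by (rule nonneg_comb_base)
  next
    case 2
    then have "(\<lambda>x. - q (Some v) * p x + (p (Some v) * q x + 0)) \<in> nonneg_comb K"
      by (intro nonneg_comb.step[OF _ nonneg_comb.step] nonneg_comb.zero) auto
    then show ?thesis using 2 by simp
  qed
qed

lemma exists_between_finite_bounds: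
  fixes f g :: "'a \<Rightarrow> real"
  assumes "finite A" "finite B" "\<And>a b. a \<in> A \<Longrightarrow> b \<in> B \<Longrightarrow> g b \<le> f a"
  shows "\<exists>t. (\<forall>b\<in>B. g b \<le> t) \<and> (\<forall>a\<in>A. t \<le> f a)"
proof (cases "B = {}")
  case True
  then show ?thesis
    using assms(1) by (intro exI[of _ "if A = {} then 0 else Min (f ` A)"]) auto
next
  case False
  then show ?thesis
    using assms by (intro exI[of _ "Max (g ` B)"]) auto
qed

text \<open>Fourier-Motzkin: the combined constraints say exactly that every lower bound on \<open>z v\<close>
  lies below every upper bound, so a value of \<open>z v\<close> between them exists.\<close>

lemma lin_feasible_fm_eliminate:
  assumes "finite V" "v \<notin> V" "finite K" "lin_feasible V (fm_eliminate v K)"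
  shows "lin_feasible (insert v V) K"
proof -
  obtain z where z: "\<forall>k\<in>fm_eliminate v K. (\<Sum>u\<in>V. k (Some u) * z u) \<le> k None"
    using assms(4) unfolding lin_feasible_def by blast
  define r where "r k = k None - (\<Sum>u\<in>V. k (Some u) * z u)" for k :: "'a option \<Rightarrow> real"
  define P where "P = {p\<in>K. 0 < p (Some v)}"
  define N where "N = {q\<in>K. q (Some v) < 0}"
  have bounds: "r q / q (Some v) \<le> r p / p (Some v)" if p: "p \<in> P" and q: "q \<in> N" for p q
  proof -
    let ?k = "\<lambda>x. - q (Some v) * p x + p (Some v) * q x"
    have "?k \<in> fm_eliminate v K"
      using p q unfolding fm_eliminate_def P_def N_def by auto
    then have "0 \<le> r ?k" using z unfolding r_def by auto
    also have "r ?k = - q (Some v) * r p + p (Some v) * r q"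
      unfolding r_def by (simp add: sum.distrib sum_distrib_left sum_subtractf sum_negf algebra_simps)
    finally have "0 \<le> - q (Some v) * r p + p (Some v) * r q" .
    moreover have "0 < p (Some v)" "q (Some v) < 0" using p q unfolding P_def N_def by auto
    ultimately show ?thesis by (simp add: field_simps)
  qed
  moreover have "finite P" "finite N" using assms(3) unfolding P_def N_def by auto
  ultimately obtain t where tN: "\<forall>q\<in>N. r q / q (Some v) \<le> t" and tP: "\<forall>p\<in>P. t \<le> r p / p (Some v)"
    using exists_between_finite_bounds[where f = "\<lambda>p. r p / p (Some v)" and g = "\<lambda>q. r q / q (Some v)"]
    by blast
  have "(\<Sum>u\<in>insert v V. k (Some u) * (z(v := t)) u) \<le> k None" if k: "k \<in> K" for k
  proof -
    have "k (Some v) * t \<le> r k"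
    proof (cases "k (Some v)" "0 :: real" rule: linorder_cases)
      case less
      then show ?thesis using tN k unfolding N_def by (simp add: field_simps)
    next
      case equal
      then have "k \<in> fm_eliminate v K" using k unfolding fm_eliminate_def by auto
      then show ?thesis using z equal unfolding r_def by simp
    next
      case greater
      then show ?thesis using tP k unfolding P_def by (simp add: field_simps)
    qed
    moreover have "(\<Sum>u\<in>V. k (Some u) * (z(v := t)) u) = (\<Sum>u\<in>V. k (Some u) * z u)"
      using assms(2) by (intro sum.cong) auto
    ultimately show ?thesis
      using assms(1,2) unfolding r_def by simp
  qed
  then show ?thesis unfolding lin_feasible_def by blast
qed

theorem infeasible_linear_system_certificate:
  assumes "finite V" "finite K" "\<not> lin_feasible V K"
  shows "\<exists>g\<in>nonneg_comb K. (\<forall>u\<in>V. g (Some u) = 0) \<and> g None < 0"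
  using assms
proof (induction V arbitrary: K rule: finite_induct)
  case empty
  then obtain k where "k \<in> K" "k None < 0"
    unfolding lin_feasible_def by (auto simp: not_le)
  then show ?case by (intro bexI[of _ k]) (auto intro: nonneg_comb_base)
next
  case (insert v V)
  have "\<not> lin_feasible V (fm_eliminate v K)"
    using lin_feasible_fm_eliminate[OF insert.hyps(1,2) insert.prems(1)] insert.prems(2) by blast
  then obtain g where g: "g \<in> nonneg_comb (fm_eliminate v K)" "\<forall>u\<in>V. g (Some u) = 0" "g None < 0"
    using insert.IH[OF finite_fm_eliminate[OF insert.prems(1)]] by blast
  have "g (Some v) = 0"
    by (intro nonneg_comb_vanishing[OF g(1)] ballI fm_eliminate_coord)
  then show ?case
    using g nonneg_comb_trans[OF g(1) fm_eliminate_subset_nonneg_comb] by (intro bexI[of _ g]) auto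
qed

text \<open>A Farkas certificate for the dual system yields a primal point below the bound: for
  \<open>\<mu>\<^sub>0 > 0\<close> it is \<open>\<mu> / \<mu>\<^sub>0\<close>, for \<open>\<mu>\<^sub>0 = 0\<close> one moves far enough from \<open>w\<close> along the ray \<open>\<mu>\<close>.\<close>

lemma cheaper_weights_of_dual_certificate:
  fixes A :: "'i \<Rightarrow> 'c \<Rightarrow> real" and S w \<mu> :: "'c \<Rightarrow> real"
  assumes w: "\<forall>j\<in>C. 0 \<le> w j" and \<mu>: "\<forall>j\<in>C. 0 \<le> \<mu> j" "0 \<le> \<mu>\<^sub>0"
    and eq: "\<forall>i\<in>I. (\<Sum>j\<in>C. \<mu> j * A i j) = \<mu>\<^sub>0 * (\<Sum>j\<in>C. A i j * w j)"
    and less: "(\<Sum>j\<in>C. \<mu> j * S j) < \<mu>\<^sub>0 * c"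
  shows "\<exists>w'. (\<forall>j\<in>C. 0 \<le> w' j) \<and> (\<forall>i\<in>I. (\<Sum>j\<in>C. A i j * w' j) = (\<Sum>j\<in>C. A i j * w j))
    \<and> (\<Sum>j\<in>C. S j * w' j) < c"
proof (cases "\<mu>\<^sub>0 = 0")
  case False
  with \<mu>(2) have pos: "0 < \<mu>\<^sub>0" by simp
  define w' where "w' j = \<mu> j / \<mu>\<^sub>0" for j
  have "(\<Sum>j\<in>C. A i j * w' j) = (\<Sum>j\<in>C. A i j * w j)" if "i \<in> I" for i
  proof -
    have "(\<Sum>j\<in>C. A i j * w' j) = (\<Sum>j\<in>C. \<mu> j * A i j) / \<mu>\<^sub>0"
      unfolding w'_def sum_divide_distrib by (intro sum.cong) auto
    also have "\<dots> = (\<Sum>j\<in>C. A i j * w j)"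
      using eq that pos by simp
    finally show ?thesis .
  qed
  moreover have "(\<Sum>j\<in>C. S j * w' j) < c"
  proof -
    have "(\<Sum>j\<in>C. S j * w' j) = (\<Sum>j\<in>C. \<mu> j * S j) / \<mu>\<^sub>0"
      unfolding w'_def sum_divide_distrib by (intro sum.cong) auto
    also have "\<dots> < c"
      using less pos by (simp add: divide_less_eq ac_simps)
    finally show ?thesis .
  qed
  moreover have "\<forall>j\<in>C. 0 \<le> w' j"
    using \<mu>(1) pos unfolding w'_def by simp
  ultimately show ?thesis by (intro exI[of _ w']) auto
next
  case True
  define s where "s = (\<Sum>j\<in>C. \<mu> j * S j)"
  define t where "t = \<bar>(\<Sum>j\<in>C. S j * w j) - c\<bar> / (- s) + 1"
  define w' where "w' j = w j + t * \<mu> j" for j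
  have s: "s < 0" using less True unfolding s_def by simp
  then have t: "0 \<le> t" unfolding t_def by simp
  have "\<forall>j\<in>C. 0 \<le> w' j"
    using w \<mu>(1) t unfolding w'_def by simp
  moreover have "(\<Sum>j\<in>C. A i j * w' j) = (\<Sum>j\<in>C. A i j * w j)" if "i \<in> I" for i
  proof -
    have "(\<Sum>j\<in>C. A i j * w' j) = (\<Sum>j\<in>C. A i j * w j) + t * (\<Sum>j\<in>C. \<mu> j * A i j)"
      unfolding w'_def by (simp add: sum.distrib sum_distrib_left algebra_simps)
    then show ?thesis using eq that True by simp
  qed
  moreover have "(\<Sum>j\<in>C. S j * w' j) < c"
  proof -
    have "(\<Sum>j\<in>C. S j * w' j) = (\<Sum>j\<in>C. S j * w j) + t * s"
      unfolding w'_def s_def by (simp add: sum.distrib sum_distrib_left algebra_simps)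
    moreover have "t * (- s) = \<bar>(\<Sum>j\<in>C. S j * w j) - c\<bar> - s"
      using s unfolding t_def by (simp add: field_simps)
    ultimately show ?thesis
      using s abs_ge_self[of "(\<Sum>j\<in>C. S j * w j) - c"] by linarith
  qed
  ultimately show ?thesis by (intro exI[of _ w']) auto
qed

lemma lp_duality_lower_bound:
  fixes A :: "'i \<Rightarrow> 'c \<Rightarrow> real" and S w :: "'c \<Rightarrow> real"
  assumes "finite I" "finite C" and w: "\<forall>j\<in>C. 0 \<le> w j"
    and lower: "\<And>w'. \<forall>j\<in>C. 0 \<le> w' j \<Longrightarrow>
        \<forall>i\<in>I. (\<Sum>j\<in>C. A i j * w' j) = (\<Sum>j\<in>C. A i j * w j) \<Longrightarrow> c \<le> (\<Sum>j\<in>C. S j * w' j)"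
  shows "\<exists>y. (\<forall>j\<in>C. (\<Sum>i\<in>I. y i * A i j) \<le> S j) \<and> c \<le> (\<Sum>i\<in>I. y i * (\<Sum>j\<in>C. A i j * w j))"
proof (rule ccontr)
  assume no_dual: "\<not> ?thesis"
  define \<beta> where "\<beta> i = (\<Sum>j\<in>C. A i j * w j)" for i
  define row where "row j x = (case (j, x) of
      (None, None) \<Rightarrow> - c | (None, Some i) \<Rightarrow> - \<beta> i
    | (Some j, None) \<Rightarrow> S j | (Some j, Some i) \<Rightarrow> A i j)" for j x
  \<comment> \<open>the dual system in \<open>y\<close>: row \<open>Some j\<close> is \<open>\<Sum>\<^sub>i y i * A i j \<le> S j\<close>, row \<open>None\<close> is \<open>- \<Sum>\<^sub>i y i * \<beta> i \<le> - c\<close>\<close>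
  let ?C = "insert None (Some ` C)"
  have "\<not> lin_feasible I (row ` ?C)"
  proof
    assume "lin_feasible I (row ` ?C)"
    then obtain y where "\<forall>j\<in>?C. (\<Sum>i\<in>I. row j (Some i) * y i) \<le> row j None"
      unfolding lin_feasible_def by auto
    then have "\<forall>j\<in>C. (\<Sum>i\<in>I. A i j * y i) \<le> S j" "(\<Sum>i\<in>I. - \<beta> i * y i) \<le> - c"
      unfolding row_def by auto
    then have "\<forall>j\<in>C. (\<Sum>i\<in>I. y i * A i j) \<le> S j" "c \<le> (\<Sum>i\<in>I. y i * \<beta> i)"
      by (simp_all add: mult.commute sum_negf)
    then show False using no_dual unfolding \<beta>_def by blast
  qed
  moreover have fin: "finite ?C" using assms(2) by simp
  ultimately obtain g where g: "g \<in> nonneg_comb (row ` ?C)" "\<forall>i\<in>I. g (Some i) = 0" "g None < 0"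
    using infeasible_linear_system_certificate[OF assms(1) finite_imageI] by blast
  obtain \<mu> where \<mu>: "\<forall>j\<in>?C. 0 \<le> \<mu> j" and g_eq: "g = (\<lambda>x. \<Sum>j\<in>?C. \<mu> j * row j x)"
    using nonneg_comb_sum_repr[OF g(1) fin] by blast
  have g_split: "g x = \<mu> None * row None x + (\<Sum>j\<in>C. \<mu> (Some j) * row (Some j) x)" for x
    unfolding g_eq using assms(2) by (simp add: sum.reindex)
  have \<mu>_Some: "\<forall>j\<in>C. 0 \<le> (\<mu> \<circ> Some) j" and \<mu>_None: "0 \<le> \<mu> None"
    using \<mu> by auto
  have "\<forall>i\<in>I. (\<Sum>j\<in>C. (\<mu> \<circ> Some) j * A i j) = \<mu> None * (\<Sum>j\<in>C. A i j * w j)"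
    using g(2) unfolding g_split row_def \<beta>_def by simp
  moreover have "(\<Sum>j\<in>C. (\<mu> \<circ> Some) j * S j) < \<mu> None * c"
    using g(3) unfolding g_split row_def by simp
  ultimately obtain w' where "\<forall>j\<in>C. 0 \<le> w' j"
    "\<forall>i\<in>I. (\<Sum>j\<in>C. A i j * w' j) = (\<Sum>j\<in>C. A i j * w j)" "(\<Sum>j\<in>C. S j * w' j) < c"
    using cheaper_weights_of_dual_certificate[OF w \<mu>_Some \<mu>_None] by blast
  then show False using lower by fastforce
qed

lemma sum_fun_apply: "(sum f A) x = (\<Sum>a\<in>A. f a x :: real)"
  by (induction A rule: infinite_finite_induct) auto

lemma vector_space_fscale: "vector_space (fscale :: real \<Rightarrow> ('c \<Rightarrow> real) \<Rightarrow> 'c \<Rightarrow> real)"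
  by unfold_locales (auto simp: fscale_def fun_eq_iff algebra_simps)

lemma mat_rank_sum_le_card:
  fixes A :: "'i \<Rightarrow> 'c \<Rightarrow> real" and y :: "'r \<Rightarrow> 'i \<Rightarrow> real"
  assumes "finite I"
  shows "mat_rank R C (\<lambda>r j. \<Sum>i\<in>I. y r i * A i j) \<le> card I"
proof -
  interpret fs: vector_space "fscale :: real \<Rightarrow> ('c \<Rightarrow> real) \<Rightarrow> 'c \<Rightarrow> real"
    by (rule vector_space_fscale)
  define a where "a i j = (if j \<in> C then A i j else 0)" for i j
  let ?rows = "(\<lambda>r j. if j \<in> C then \<Sum>i\<in>I. y r i * A i j else 0) ` R"
  have "?rows \<subseteq> fs.span (a ` I)"
  proof
    fix x assume "x \<in> ?rows"
    then obtain r where "x = (\<lambda>j. if j \<in> C then \<Sum>i\<in>I. y r i * A i j else 0)" by blast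
    then have "x = (\<Sum>i\<in>I. fscale (y r i) (a i))"
      by (auto simp: sum_fun_apply fscale_def a_def)
    also have "\<dots> \<in> fs.span (a ` I)"
      by (intro fs.span_sum fs.span_scale fs.span_base) auto
    finally show "x \<in> fs.span (a ` I)" .
  qed
  then have "fs.dim ?rows \<le> card (a ` I)"
    using assms by (intro fs.dim_le_card) auto
  also have "\<dots> \<le> card I" using assms by (rule card_image_le)
  finally show ?thesis unfolding mat_rank_def .
qed

lemma finite_vpairs: "finite (vpairs n)"
  by (rule finite_subset[of _ "{..<n} \<times> {..<n}"]) (auto simp: vpairs_def)

lemma finite_cut_sets: "finite (cut_sets n)"
  by (rule finite_subset[of _ "Pow {0..<n}"]) (auto simp: cut_sets_def)

lemma mincut_le_cut: "X \<in> cut_sets n \<Longrightarrow> mincut n w \<le> ip n (cutvec X) w"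
  unfolding mincut_def using finite_cut_sets by (intro Min_le) auto

lemma mincut_cong: "\<forall>p\<in>vpairs n. w1 p = w2 p \<Longrightarrow> mincut n w1 = mincut n w2"
proof -
  assume "\<forall>p\<in>vpairs n. w1 p = w2 p"
  then have "ip n x w1 = ip n x w2" for x unfolding ip_def by (intro sum.cong) auto
  then show ?thesis unfolding mincut_def by simp
qed

text \<open>As \<open>Y \<le> M\<^sub>G\<close> entrywise and \<open>w \<ge> 0\<close>, the \<open>\<ell>\<^sub>1\<close>-error of row \<open>X\<close> is
  \<open>\<langle>S\<^sub>X, w\<rangle> - \<langle>Y\<^sub>X, w\<rangle> \<le> \<langle>S\<^sub>X, w\<rangle> - c\<^sup>*\<close>.\<close>

lemma approx_cdim_le_card:
  fixes A :: "'i \<Rightarrow> nat \<times> nat \<Rightarrow> real"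
  assumes "finite I" and w: "weighted_graph n w"
    and comb: "\<forall>X\<in>bipartitions n. \<exists>y. (\<forall>p\<in>vpairs n. (\<Sum>i\<in>I. y i * A i p) \<le> cut_matrix X p)
      \<and> mincut n w \<le> (\<Sum>i\<in>I. y i * ip n (A i) w)"
  shows "approx_cdim n w \<le> card I"
proof -
  obtain y where y: "\<forall>X\<in>bipartitions n. (\<forall>p\<in>vpairs n. (\<Sum>i\<in>I. y X i * A i p) \<le> cut_matrix X p)
      \<and> mincut n w \<le> (\<Sum>i\<in>I. y X i * ip n (A i) w)"
    using bchoice[OF comb] by blast
  define Y where "Y X p = (\<Sum>i\<in>I. y X i * A i p)" for X p
  have below: "\<forall>X\<in>bipartitions n. \<forall>p\<in>vpairs n. Y X p \<le> cut_matrix X p"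
    using y unfolding Y_def by blast
  have "(\<Sum>p\<in>vpairs n. \<bar>w p * (cut_matrix X p - Y X p)\<bar>) \<le> ip n (cut_matrix X) w - mincut n w"
    if X: "X \<in> bipartitions n" for X
  proof -
    have "(\<Sum>p\<in>vpairs n. \<bar>w p * (cut_matrix X p - Y X p)\<bar>)
        = (\<Sum>p\<in>vpairs n. w p * (cut_matrix X p - Y X p))"
      using below X w unfolding weighted_graph_def by (intro sum.cong) auto
    also have "\<dots> = ip n (cut_matrix X) w - (\<Sum>i\<in>I. y X i * ip n (A i) w)"
      unfolding ip_def Y_def
      by (simp add: algebra_simps sum_subtractf sum_distrib_left sum_distrib_right sum.swap[of _ I])
    finally show ?thesis using y X by auto
  qed
  then have "approx_cdim n w \<le> mat_rank (bipartitions n) (vpairs n) Y"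
    unfolding approx_cdim_def os_l1_approx_rank_def using below by (intro Least_le) blast
  also have "\<dots> \<le> card I"
    unfolding Y_def using assms(1) by (rule mat_rank_sum_le_card)
  finally show ?thesis .
qed

primrec query_seq :: "qtree \<Rightarrow> nat \<Rightarrow> (nat \<times> nat \<Rightarrow> real) \<Rightarrow> (nat \<times> nat \<Rightarrow> real) list" where
  "query_seq (Leaf r) n w = []"
| "query_seq (Query x f) n w = x # query_seq (f (ip n x w)) n w"

lemma length_query_seq: "length (query_seq T n w) = queries T n w"
  by (induction T) auto

lemma run_eq_if_same_answers:
  "\<forall>x\<in>set (query_seq T n w). ip n x w' = ip n x w \<Longrightarrow> run T n w' = run T n w"
  by (induction T) auto

lemma approx_cdim_le_queries:
  assumes correct: "\<forall>w. weighted_graph n w \<longrightarrow> run T n w = mincut n w"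
    and w: "weighted_graph n w"
  shows "approx_cdim n w \<le> queries T n w"
proof -
  define xs where "xs = query_seq T n w"
  have "\<exists>y. (\<forall>p\<in>vpairs n. (\<Sum>i<length xs. y i * (xs ! i) p) \<le> cut_matrix X p)
      \<and> mincut n w \<le> (\<Sum>i<length xs. y i * ip n (xs ! i) w)"
    if X: "X \<in> bipartitions n" for X
    unfolding ip_def
  proof (rule lp_duality_lower_bound)
    fix w' assume w': "\<forall>p\<in>vpairs n. 0 \<le> w' p"
      and same: "\<forall>i\<in>{..<length xs}. (\<Sum>p\<in>vpairs n. (xs ! i) p * w' p) = (\<Sum>p\<in>vpairs n. (xs ! i) p * w p)"
    have "run T n w' = run T n w"
      using same unfolding xs_def by (intro run_eq_if_same_answers) (auto simp: in_set_conv_nth ip_def)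
    then have "mincut n w = mincut n w'"
      using correct w w' unfolding weighted_graph_def by metis
    also have "\<dots> \<le> ip n (cutvec X) w'"
      using X unfolding bipartitions_def by (intro mincut_le_cut) auto
    finally show "mincut n w \<le> (\<Sum>p\<in>vpairs n. cut_matrix X p * w' p)"
      unfolding ip_def cut_matrix_def .
  qed (use w finite_vpairs in \<open>auto simp: weighted_graph_def\<close>)
  then have "approx_cdim n w \<le> card {..<length xs}"
    using w by (intro approx_cdim_le_card) auto
  then show ?thesis unfolding xs_def by (simp add: length_query_seq)
qed

fun query_all :: "(nat \<times> nat) list \<Rightarrow> (nat \<times> nat \<Rightarrow> real) \<Rightarrow> nat \<Rightarrow> qtree" where
  "query_all [] acc n = Leaf (mincut n acc)"
| "query_all (p # ps) acc n = Query (\<lambda>q. if q = p then 1 else 0) (\<lambda>r. query_all ps (acc(p := r)) n)"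

lemma run_query_all:
  "set ps \<subseteq> vpairs n \<Longrightarrow>
    run (query_all ps acc n) n w = mincut n (\<lambda>q. if q \<in> set ps then w q else acc q)"
proof (induction ps arbitrary: acc)
  case Nil
  then show ?case by simp
next
  case (Cons p ps)
  have "ip n (\<lambda>q. if q = p then 1 else 0) w = (\<Sum>q\<in>vpairs n. if q = p then w p else 0)"
    unfolding ip_def by (intro sum.cong) auto
  then have "ip n (\<lambda>q. if q = p then 1 else 0) w = w p"
    using Cons.prems finite_vpairs by simp
  then have "run (query_all (p # ps) acc n) n w
      = mincut n (\<lambda>q. if q \<in> set ps then w q else (acc(p := w p)) q)"
    using Cons by simp
  also have "(\<lambda>q. if q \<in> set ps then w q else (acc(p := w p)) q)
      = (\<lambda>q. if q \<in> set (p # ps) then w q else acc q)"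
    by auto
  finally show ?case .
qed

lemma queries_query_all: "queries (query_all ps acc n) n w = length ps"
  by (induction ps arbitrary: acc) auto

text \<open>Querying every coordinate solves the problem, so the \<open>LEAST\<close> in \<open>D_lin_mincut\<close>
  is taken over a nonempty set.\<close>

lemma D_lin_mincut_attained:
  "\<exists>T. \<forall>w. weighted_graph n w \<longrightarrow> run T n w = mincut n w \<and> queries T n w \<le> D_lin_mincut n"
proof -
  obtain ps where ps: "set ps = vpairs n"
    using finite_list[OF finite_vpairs] by blast
  have "\<forall>w. weighted_graph n w \<longrightarrow>
      run (query_all ps (\<lambda>_. 0) n) n w = mincut n w \<and> queries (query_all ps (\<lambda>_. 0) n) n w \<le> length ps"
    using run_query_all[of ps n] ps by (auto simp: queries_query_all intro: mincut_cong)
  then have "\<exists>d T. \<forall>w. weighted_graph n w \<longrightarrow> run T n w = mincut n w \<and> queries T n w \<le> d"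
    by blast
  then show ?thesis
    unfolding D_lin_mincut_def by (rule LeastI_ex)
qed

theorem theorem4:
  fixes n k :: nat and w :: "nat \<times> nat \<Rightarrow> real"
  assumes "weighted_graph n w"
    and "approx_cdim n w = k"
  shows "k \<le> D_lin_mincut n"
proof -
  obtain T where T: "\<forall>w. weighted_graph n w \<longrightarrow> run T n w = mincut n w \<and> queries T n w \<le> D_lin_mincut n"
    using D_lin_mincut_attained by blast
  then have "approx_cdim n w \<le> queries T n w"
    using assms(1) by (intro approx_cdim_le_queries) auto
  also have "\<dots> \<le> D_lin_mincut n" using T assms(1) by blast
  finally show ?thesis using assms(2) by simp
qed

end
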